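(* Let $\Lambda$ be a finite nonempty set and $m,c\ge1$ natural numbers with $|\Lambda|$ dividing $m$. Then (1) $f^{10}_\Lambda(m,c)\le m\cdot HJ(|\Lambda|^m,c)$; (2) $f^{9,*}_\Lambda(m,c)\le m\cdot HJ(|\Lambda|^m,c)$ (with the convention $m\cdot\omega=\omega$).
   Context: Let $\Lambda$ be a finite nonempty alphabet, $[k]=\{1,\dots,k\}$, and ${}^{[k]}\Lambda$ the set of functions $[k]\to\Lambda$. A $c$-colouring of ${}^{[k]}\Lambda$ is a function $d$ from ${}^{[k]}\Lambda$ into a set with at most $c$ elements. A configuration for $(k,m)$ is a pair $(\langle M_\ell:\ell<m\rangle,\eta^* )$ where (a) the $M_\ell\subseteq[k]$ are pairwise disjoint and $\eta^*$ is a function from $[k]\setminus\bigcup_{\ell<m}M_\ell$ into $\Lambda$. Its set of points is $S=\{\eta\in{}^{[k]}\Lambda:\eta^*\subseteq\eta$ and each $\eta\restriction M_\ell$ is constant$\}$, and for $\eta\in S$, $\alpha\in\Lambda$ let $\mathrm{cnt}_\eta(\alpha)=|\{\ell<m:\eta\restriction M_\ell$ is constantly $\alpha\}|$. Consider the conditions: (b) $|M_\ell|=|M_0|>0$ for all $\ell<m$; (b$'$) $M_\ell\neq\emptyset$ for all $\ell<m$; (c) $d(\nu_1)=d(\nu_2)$ whenever $\nu_1,\nu_2\in S$ and $\mathrm{cnt}_{\nu_1}(\alpha)=\mathrm{cnt}_{\nu_2}(\alpha)=m/|\Lambda|$ for every $\alpha\in\Lambda$; (c$^+$) $d(\nu_1)=d(\nu_2)$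 whenever $\nu_1,\nu_2\in S$ and $\mathrm{cnt}_{\nu_1}(\alpha)=\mathrm{cnt}_{\nu_2}(\alpha)$ for every $\alpha\in\Lambda$; (c$'$) $d\restriction S$ is constant; (d) for all $\alpha,\beta\in\Lambda$, $|\{a:\eta^*(a)=\alpha\}|=|\{a:\eta^*(a)=\beta\}|$. For a list $X$ of these conditions, the associated number is the least $k\le\omega$ divisible by $|\Lambda|$ (with $\omega$ if none exists) such that for every $c$-colouring $d$ of ${}^{[k]}\Lambda$ there is a configuration for $(k,m)$ satisfying (a) and all conditions in $X$. Then $f^{10}_\Lambda(m,c)$ uses (b),(c),(d); $f^{9,*}_\Lambda(m,c)$ uses (b),(c$^+$); $HJ_\Lambda(m,c)$ uses (b$'$),(c$'$). Finally $HJ(n,c)=HJ_{\{1,\dots,n\}}(1,c)$ (the Hales–Jewett number for an $n$-letter alphabet). *)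

theory Defs
  imports Main "HOL-Library.FuncSet" "HOL-Library.Extended_Nat"
begin

text \<open>A configuration for (k,m) is a family
  M :: nat => nat set (only indices l < m matter) and a function eta* on
  [k] minus the union of the M l, again extensional.\<close>

definition cfg_dom :: "nat \<Rightarrow> nat \<Rightarrow> (nat \<Rightarrow> nat set) \<Rightarrow> nat set" where
  "cfg_dom k m M = {1..k} - (\<Union>l<m. M l)"

definition is_config :: "'a set \<Rightarrow> nat \<Rightarrow> nat \<Rightarrow> (nat \<Rightarrow> nat set) \<Rightarrow> (nat \<Rightarrow> 'a) \<Rightarrow> bool" where
  "is_config L k m M e \<longleftrightarrow>
     (\<forall>l<m. M l \<subseteq> {1..k}) \<and>
     (\<forall>l<m. \<forall>l'<m. l \<noteq> l' \<longrightarrow> M l \<inter> M l' = {}) \<and>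
     e \<in> cfg_dom k m M \<rightarrow>\<^sub>E L"

definition cfg_points :: "'a set \<Rightarrow> nat \<Rightarrow> nat \<Rightarrow> (nat \<Rightarrow> nat set) \<Rightarrow> (nat \<Rightarrow> 'a) \<Rightarrow> (nat \<Rightarrow> 'a) set" where
  "cfg_points L k m M e =
     {\<eta> \<in> {1..k} \<rightarrow>\<^sub>E L. (\<forall>a\<in>cfg_dom k m M. \<eta> a = e a) \<and>
                         (\<forall>l<m. \<forall>a\<in>M l. \<forall>b\<in>M l. \<eta> a = \<eta> b)}"

definition cnt :: "nat \<Rightarrow> (nat \<Rightarrow> nat set) \<Rightarrow> (nat \<Rightarrow> 'a) \<Rightarrow> 'a \<Rightarrow> nat" where
  "cnt m M \<eta> \<alpha> = card {l. l < m \<and> (\<forall>a\<in>M l. \<eta> a = \<alpha>)}"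

definition cond_b :: "nat \<Rightarrow> (nat \<Rightarrow> nat set) \<Rightarrow> bool" where
  "cond_b m M \<longleftrightarrow> (\<forall>l<m. card (M l) = card (M 0) \<and> card (M 0) > 0)"

definition cond_b' :: "nat \<Rightarrow> (nat \<Rightarrow> nat set) \<Rightarrow> bool" where
  "cond_b' m M \<longleftrightarrow> (\<forall>l<m. M l \<noteq> {})"

definition cond_c :: "'a set \<Rightarrow> nat \<Rightarrow> nat \<Rightarrow> (nat \<Rightarrow> nat set) \<Rightarrow> (nat \<Rightarrow> 'a) \<Rightarrow> ((nat \<Rightarrow> 'a) \<Rightarrow> nat) \<Rightarrow> bool" where
  "cond_c L k m M e d \<longleftrightarrow>
     (\<forall>\<nu>1\<in>cfg_points L k m M e. \<forall>\<nu>2\<in>cfg_points L k m M e.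
        (\<forall>\<alpha>\<in>L. real (cnt m M \<nu>1 \<alpha>) = real m / real (card L) \<and>
                 real (cnt m M \<nu>2 \<alpha>) = real m / real (card L)) \<longrightarrow> d \<nu>1 = d \<nu>2)"

definition cond_c_plus :: "'a set \<Rightarrow> nat \<Rightarrow> nat \<Rightarrow> (nat \<Rightarrow> nat set) \<Rightarrow> (nat \<Rightarrow> 'a) \<Rightarrow> ((nat \<Rightarrow> 'a) \<Rightarrow> nat) \<Rightarrow> bool" where
  "cond_c_plus L k m M e d \<longleftrightarrow>
     (\<forall>\<nu>1\<in>cfg_points L k m M e. \<forall>\<nu>2\<in>cfg_points L k m M e.
        (\<forall>\<alpha>\<in>L. cnt m M \<nu>1 \<alpha> = cnt m M \<nu>2 \<alpha>) \<longrightarrow> d \<nu>1 = d \<nu>2)"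

definition cond_c' :: "'a set \<Rightarrow> nat \<Rightarrow> nat \<Rightarrow> (nat \<Rightarrow> nat set) \<Rightarrow> (nat \<Rightarrow> 'a) \<Rightarrow> ((nat \<Rightarrow> 'a) \<Rightarrow> nat) \<Rightarrow> bool" where
  "cond_c' L k m M e d \<longleftrightarrow>
     (\<forall>\<nu>1\<in>cfg_points L k m M e. \<forall>\<nu>2\<in>cfg_points L k m M e. d \<nu>1 = d \<nu>2)"

definition cond_d :: "'a set \<Rightarrow> nat \<Rightarrow> nat \<Rightarrow> (nat \<Rightarrow> nat set) \<Rightarrow> (nat \<Rightarrow> 'a) \<Rightarrow> bool" where
  "cond_d L k m M e \<longleftrightarrow>
     (\<forall>\<alpha>\<in>L. \<forall>\<beta>\<in>L. card {a\<in>cfg_dom k m M. e a = \<alpha>} = card {a\<in>cfg_dom k m M. e a = \<beta>})"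

text \<open>A c-colouring is modelled as a map into {..<c} (any colouring into a set
  with at most c elements can be injected into {..<c}).\<close>

definition colouring_prop ::
  "'a set \<Rightarrow> nat \<Rightarrow> nat \<Rightarrow>
   (nat \<Rightarrow> (nat \<Rightarrow> nat set) \<Rightarrow> (nat \<Rightarrow> 'a) \<Rightarrow> ((nat \<Rightarrow> 'a) \<Rightarrow> nat) \<Rightarrow> bool) \<Rightarrow> nat \<Rightarrow> bool" where
  "colouring_prop L m c P k \<longleftrightarrow>
     (\<forall>d. d ` ({1..k} \<rightarrow>\<^sub>E L) \<subseteq> {..<c} \<longrightarrow>
        (\<exists>M e. is_config L k m M e \<and> P k M e d))"

definition assoc_num ::
  "'a set \<Rightarrow> nat \<Rightarrow> nat \<Rightarrow>
   (nat \<Rightarrow> (nat \<Rightarrow> nat set) \<Rightarrow> (nat \<Rightarrow> 'a) \<Rightarrow> ((nat \<Rightarrow> 'a) \<Rightarrow> nat) \<Rightarrow> bool) \<Rightarrow> enat" where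
  "assoc_num L m c P =
     (if \<exists>k. card L dvd k \<and> colouring_prop L m c P k
      then enat (LEAST k. card L dvd k \<and> colouring_prop L m c P k)
      else \<infinity>)"

definition f10 :: "'a set \<Rightarrow> nat \<Rightarrow> nat \<Rightarrow> enat" where
  "f10 L m c = assoc_num L m c
     (\<lambda>k M e d. cond_b m M \<and> cond_c L k m M e d \<and> cond_d L k m M e)"

definition f9star :: "'a set \<Rightarrow> nat \<Rightarrow> nat \<Rightarrow> enat" where
  "f9star L m c = assoc_num L m c
     (\<lambda>k M e d. cond_b m M \<and> cond_c_plus L k m M e d)"

definition HJ_L :: "'a set \<Rightarrow> nat \<Rightarrow> nat \<Rightarrow> enat" where
  "HJ_L L m c = assoc_num L m c
     (\<lambda>k M e d. cond_b' m M \<and> cond_c' L k m M e d)"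

definition HJ :: "nat \<Rightarrow> nat \<Rightarrow> enat" where
  "HJ n c = HJ_L {1..n} 1 c"

end

theory Submission
  imports Defs
begin

(* Split the m * k coordinates into m rows of k consecutive coordinates, l * k + j being
   row l, column j. Name the words of length m over L with admissible letter counts by the
   alphabet {1..|L|^m}, and lift a word x of length k over this alphabet to the word of
   length m * k whose column j is the word named by x j. Hales-Jewett for the induced
   colouring gives a monochromatic line; the copies of its moving set in the m rows form
   the M_l, and its fixed letters give the fixed columns. A point of the resulting
   configuration has the same letter counts as its column on the moving set; if these
   counts are admissible, that column is named by some letter and the point is the lift of
   a point of the line. Admitting all counts gives the bound for f9star; admitting only
   balanced counts gives the bound for f10, condition (d) holding since every fixed column
   is then balanced. *)

definition grid_row :: "nat \<Rightarrow> nat \<Rightarrow> nat" where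
  "grid_row k p = (p - 1) div k"

definition grid_col :: "nat \<Rightarrow> nat \<Rightarrow> nat" where
  "grid_col k p = (p - 1) mod k + 1"

lemma grid_row_pos [simp]: "j \<in> {1..k} \<Longrightarrow> grid_row k (l * k + j) = l"
proof -
  assume "j \<in> {1..k}"
  then obtain i where "j = Suc i" "i < k" by (cases j) auto
  then show ?thesis by (simp add: grid_row_def)
qed

lemma grid_col_pos [simp]: "j \<in> {1..k} \<Longrightarrow> grid_col k (l * k + j) = j"
proof -
  assume "j \<in> {1..k}"
  then obtain i where "j = Suc i" "i < k" by (cases j) auto
  then show ?thesis by (simp add: grid_col_def)
qed

lemma grid_row_col: "1 \<le> p \<Longrightarrow> grid_row k p * k + grid_col k p = p"
  unfolding grid_row_def grid_col_def using div_mult_mod_eq[of "p - 1" k] by linarith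

lemma grid_row_less: "p \<in> {1..m * k} \<Longrightarrow> grid_row k p < m"
  by (auto simp: grid_row_def less_mult_imp_div_less)

lemma grid_col_mem: "0 < k \<Longrightarrow> grid_col k p \<in> {1..k}"
  by (simp add: grid_col_def Suc_leI)

lemma grid_pos_mem: "(l::nat) < m \<Longrightarrow> j \<in> {1..k} \<Longrightarrow> l * k + j \<in> {1..m * k}"
proof -
  assume "l < m" "j \<in> {1..k}"
  then have "l * k + j \<le> Suc l * k" by simp
  also have "\<dots> \<le> m * k" using \<open>l < m\<close> by (intro mult_right_mono) auto
  finally show ?thesis using \<open>j \<in> {1..k}\<close> by simp
qed

definition letter_count :: "nat \<Rightarrow> (nat \<Rightarrow> 'a) \<Rightarrow> 'a \<Rightarrow> nat" where
  "letter_count m h \<alpha> = card {l. l < m \<and> h l = \<alpha>}"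

definition lift_word :: "nat \<Rightarrow> nat \<Rightarrow> (nat \<Rightarrow> nat \<Rightarrow> 'a) \<Rightarrow> (nat \<Rightarrow> nat) \<Rightarrow> nat \<Rightarrow> 'a" where
  "lift_word m k g x p =
     (if p \<in> {1..m * k} then g (x (grid_col k p)) (grid_row k p) else undefined)"

lemma lift_word_PiE:
  assumes "\<And>a l. l < m \<Longrightarrow> g a l \<in> L"
  shows "lift_word m k g x \<in> {1..m * k} \<rightarrow>\<^sub>E L"
  using assms by (auto simp: lift_word_def grid_row_less)

lemma cfg_dom_one_block: "cfg_dom k (Suc 0) M = {1..k} - M 0"
  by (simp add: cfg_dom_def lessThan_Suc)

lemma cfg_points_one_block: "cfg_points A k 1 M e = cfg_points A k 1 (\<lambda>_. M 0) e"
  by (simp add: cfg_points_def cfg_dom_one_block)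

lemma line_point_mem_cfg_points:
  assumes e0: "e0 \<in> ({1..k} - M0) \<rightarrow>\<^sub>E A" and M0: "M0 \<subseteq> {1..k}" and a: "a \<in> A"
  shows "(\<lambda>i. if i \<in> M0 then a else e0 i) \<in> cfg_points A k 1 (\<lambda>_. M0) e0"
proof -
  have "(\<lambda>i. if i \<in> M0 then a else e0 i) \<in> {1..k} \<rightarrow>\<^sub>E A"
  proof (rule PiE_I)
    fix i assume "i \<in> {1..k}"
    then show "(if i \<in> M0 then a else e0 i) \<in> A" using a PiE_mem[OF e0, of i] by simp
  next
    fix i assume "i \<notin> {1..k}"
    then have "i \<notin> M0" and "i \<notin> {1..k} - M0" using M0 by auto
    then show "(if i \<in> M0 then a else e0 i) = undefined" by (simp add: PiE_arb[OF e0])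
  qed
  then show ?thesis by (simp add: cfg_points_def cfg_dom_one_block)
qed

(* M0 and e0 are the moving set and the fixed part of a line of length k over an alphabet
   whose letters a name the column words g a. *)
locale line_blowup =
  fixes L :: "'a set" and m k :: nat and M0 :: "nat set" and e0 :: "nat \<Rightarrow> nat"
    and g :: "nat \<Rightarrow> nat \<Rightarrow> 'a"
  assumes M0_sub: "M0 \<subseteq> {1..k}" and M0_ne: "M0 \<noteq> {}"
    and g_in: "l < m \<Longrightarrow> g a l \<in> L"
begin

definition block :: "nat \<Rightarrow> nat set" where
  "block l = (\<lambda>j. l * k + j) ` M0"

abbreviation lift :: "(nat \<Rightarrow> nat) \<Rightarrow> nat \<Rightarrow> 'a" where
  "lift \<equiv> lift_word m k g"

definition fixed :: "nat \<Rightarrow> 'a" where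
  "fixed = restrict (lift e0) (cfg_dom (m * k) m block)"

lemma k_pos: "0 < k"
  using M0_sub M0_ne by (cases k) auto

lemma lift_PiE: "lift x \<in> {1..m * k} \<rightarrow>\<^sub>E L"
  using g_in by (rule lift_word_PiE)

lemma mem_block_iff:
  assumes "l < m"
  shows "p \<in> block l \<longleftrightarrow> p \<in> {1..m * k} \<and> grid_row k p = l \<and> grid_col k p \<in> M0"
proof
  assume "p \<in> block l"
  then obtain j where "j \<in> M0" "p = l * k + j" unfolding block_def by auto
  then show "p \<in> {1..m * k} \<and> grid_row k p = l \<and> grid_col k p \<in> M0"
    using grid_pos_mem[OF assms] M0_sub by auto
next
  assume p: "p \<in> {1..m * k} \<and> grid_row k p = l \<and> grid_col k p \<in> M0"
  then have "p = l * k + grid_col k p" using grid_row_col[of p k] by auto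
  then show "p \<in> block l" unfolding block_def using p by blast
qed

lemma cfg_dom_block: "cfg_dom (m * k) m block = {p \<in> {1..m * k}. grid_col k p \<notin> M0}"
  by (auto simp: cfg_dom_def mem_block_iff grid_row_less)

lemma is_config_block: "is_config L (m * k) m block fixed"
  unfolding is_config_def fixed_def
  using lift_PiE by (auto simp: mem_block_iff cfg_dom_def)

lemma cond_b_block: "cond_b m block"
proof -
  have "card (block l) = card M0" for l
    unfolding block_def by (rule card_image) (simp add: inj_on_def)
  moreover have "finite M0" using M0_sub finite_subset by blast
  ultimately show ?thesis unfolding cond_b_def using M0_ne by (simp add: card_gt_0_iff)
qed

lemma cnt_block:
  assumes \<nu>: "\<nu> \<in> cfg_points L (m * k) m block fixed" and j: "j \<in> M0"
  shows "cnt m block \<nu> = letter_count m (\<lambda>l. \<nu> (l * k + j))"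
proof
  fix \<alpha>
  have "l * k + j \<in> block l" for l using j unfolding block_def by blast
  then have "(\<forall>p\<in>block l. \<nu> p = \<alpha>) \<longleftrightarrow> \<nu> (l * k + j) = \<alpha>" if "l < m" for l
    using \<nu> that unfolding cfg_points_def by blast
  then show "cnt m block \<nu> \<alpha> = letter_count m (\<lambda>l. \<nu> (l * k + j)) \<alpha>"
    unfolding cnt_def letter_count_def by (metis (lifting))
qed

lemma cfg_point_eq_lift:
  assumes \<nu>: "\<nu> \<in> cfg_points L (m * k) m block fixed" and j: "j \<in> M0"
    and rows: "\<And>l. l < m \<Longrightarrow> \<nu> (l * k + j) = g a l"
  shows "\<nu> = lift (\<lambda>i. if i \<in> M0 then a else e0 i)"
proof
  fix p
  show "\<nu> p = lift (\<lambda>i. if i \<in> M0 then a else e0 i) p"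
  proof (cases "p \<in> {1..m * k}")
    case False
    then show ?thesis using \<nu> by (auto simp: cfg_points_def lift_word_def)
  next
    case p: True
    define l where "l = grid_row k p"
    have l: "l < m" using p grid_row_less l_def by blast
    show ?thesis
    proof (cases "grid_col k p \<in> M0")
      case True
      have "p \<in> block l" using p True l by (simp add: mem_block_iff l_def)
      moreover have "l * k + j \<in> block l" using j unfolding block_def by blast
      ultimately have "\<nu> p = \<nu> (l * k + j)" using \<nu> l unfolding cfg_points_def by blast
      then show ?thesis using rows[OF l] p True by (simp add: lift_word_def l_def)
    next
      case False
      then have "p \<in> cfg_dom (m * k) m block" using p by (simp add: cfg_dom_block)
      then have "\<nu> p = lift e0 p" using \<nu> by (simp add: cfg_points_def fixed_def)
      then show ?thesis using p False by (simp add: lift_word_def)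
    qed
  qed
qed

lemma cfg_point_on_line:
  assumes \<nu>: "\<nu> \<in> cfg_points L (m * k) m block fixed" and j: "j \<in> M0"
    and e0: "e0 \<in> ({1..k} - M0) \<rightarrow>\<^sub>E A"
    and column: "restrict (\<lambda>l. \<nu> (l * k + j)) {..<m} \<in> g ` A"
  shows "\<exists>x \<in> cfg_points A k 1 (\<lambda>_. M0) e0. \<nu> = lift x"
proof -
  obtain a where a: "a \<in> A" "g a = restrict (\<lambda>l. \<nu> (l * k + j)) {..<m}"
    using column by (metis imageE)
  have "\<nu> = lift (\<lambda>i. if i \<in> M0 then a else e0 i)"
    using a(2) by (intro cfg_point_eq_lift[OF \<nu> j]) (metis lessThan_iff restrict_apply')
  then show ?thesis using line_point_mem_cfg_points[OF e0 M0_sub a(1)] by blast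
qed

lemma card_fixed_letter:
  "card {p \<in> cfg_dom (m * k) m block. fixed p = \<alpha>} =
     (\<Sum>j\<in>{1..k} - M0. letter_count m (g (e0 j)) \<alpha>)"
proof -
  define S where "S = (SIGMA j:{1..k} - M0. {l. l < m \<and> g (e0 j) l = \<alpha>})"
  have inj: "inj_on (\<lambda>(j, l). l * k + j) S"
  proof (rule inj_onI, clarify)
    fix j l j' l' assume "(j, l) \<in> S" "(j', l') \<in> S" and eq: "l * k + j = l' * k + j'"
    then have "j \<in> {1..k}" "j' \<in> {1..k}" unfolding S_def by auto
    then show "j = j' \<and> l = l'"
      using arg_cong[OF eq, of "grid_row k"] arg_cong[OF eq, of "grid_col k"] by simp
  qed
  have image: "(\<lambda>(j, l). l * k + j) ` S = {p \<in> cfg_dom (m * k) m block. fixed p = \<alpha>}"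
  proof (intro equalityI subsetI)
    fix p assume "p \<in> (\<lambda>(j, l). l * k + j) ` S"
    then obtain j l where jl: "j \<in> {1..k}" "j \<notin> M0" "l < m" "g (e0 j) l = \<alpha>"
      and p: "p = l * k + j"
      unfolding S_def by auto
    then have "p \<in> cfg_dom (m * k) m block"
      using grid_pos_mem[of l m j k] by (simp add: cfg_dom_block)
    then show "p \<in> {p \<in> cfg_dom (m * k) m block. fixed p = \<alpha>}"
      using jl p grid_pos_mem[of l m j k] by (simp add: fixed_def lift_word_def)
  next
    fix p assume "p \<in> {p \<in> cfg_dom (m * k) m block. fixed p = \<alpha>}"
    then have p: "p \<in> {1..m * k}" "grid_col k p \<notin> M0" "g (e0 (grid_col k p)) (grid_row k p) = \<alpha>"
      by (auto simp: cfg_dom_block fixed_def lift_word_def)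
    then have "(grid_col k p, grid_row k p) \<in> S"
      unfolding S_def using grid_col_mem[OF k_pos] grid_row_less by auto
    moreover have "p = grid_row k p * k + grid_col k p" using p(1) grid_row_col by simp
    ultimately show "p \<in> (\<lambda>(j, l). l * k + j) ` S"
      by (intro image_eqI[where x = "(grid_col k p, grid_row k p)"]) simp_all
  qed
  have "card {p \<in> cfg_dom (m * k) m block. fixed p = \<alpha>} = card S"
    using card_image[OF inj] unfolding image .
  also have "\<dots> = (\<Sum>j\<in>{1..k} - M0. letter_count m (g (e0 j)) \<alpha>)"
    unfolding S_def letter_count_def by (rule card_SigmaI) simp_all
  finally show ?thesis .
qed

lemma cond_d_block:
  assumes "\<And>j \<alpha> \<beta>. j \<in> {1..k} - M0 \<Longrightarrow> \<alpha> \<in> L \<Longrightarrow> \<beta> \<in> L \<Longrightarrow>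
             letter_count m (g (e0 j)) \<alpha> = letter_count m (g (e0 j)) \<beta>"
  shows "cond_d L (m * k) m block fixed"
  unfolding cond_d_def card_fixed_letter using assms by (metis (no_types, lifting) sum.cong)

end

lemma ex_onto_interval:
  assumes "finite B" and "B \<noteq> {}" and "card B \<le> n"
  obtains g :: "nat \<Rightarrow> 'b" where "g ` {1..n} = B" and "\<And>a. g a \<in> B"
proof -
  obtain f where f: "bij_betw f {1..card B} B" using ex_bij_betw_nat_finite_1[OF assms(1)] by blast
  have one: "1 \<in> {1..card B}" using assms(1,2) by (simp add: Suc_leI card_gt_0_iff)
  define g where "g a = f (if a \<in> {1..card B} then a else 1)" for a
  have g_in: "g a \<in> B" for a
  proof -
    have "(if a \<in> {1..card B} then a else 1) \<in> {1..card B}" using one by simp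
    then show ?thesis unfolding g_def by (rule bij_betw_apply[OF f])
  qed
  have "B \<subseteq> g ` {1..n}"
  proof
    fix b assume "b \<in> B"
    then obtain a where a: "a \<in> {1..card B}" "f a = b"
      using bij_betw_imp_surj_on[OF f] by (metis imageE)
    have "g a = b" using a by (simp add: g_def)
    moreover have "a \<in> {1..n}" using a assms(3) by simp
    ultimately show "b \<in> g ` {1..n}" by blast
  qed
  moreover have "g ` {1..n} \<subseteq> B" using g_in by blast
  ultimately have "g ` {1..n} = B" by (rule antisym[rotated])
  then show ?thesis using g_in by (rule that)
qed

lemma card_le_words:
  assumes "finite L" and "G \<subseteq> {..<m} \<rightarrow>\<^sub>E L"
  shows "finite G" and "card G \<le> card L ^ m"
proof -
  have "finite ({..<m} \<rightarrow>\<^sub>E L)" using assms(1) by (simp add: finite_PiE)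
  then show "finite G" using assms(2) by (rule finite_subset[rotated])
  have "card G \<le> card ({..<m} \<rightarrow>\<^sub>E L)"
    using assms(2) \<open>finite ({..<m} \<rightarrow>\<^sub>E L)\<close> by (rule card_mono[rotated])
  then show "card G \<le> card L ^ m" by (simp add: card_PiE)
qed

lemma letter_count_restrict [simp]: "letter_count m (restrict h {..<m}) = letter_count m h"
  by (auto simp: letter_count_def intro!: arg_cong[where f = card])

lemma colouring_prop_blowup:
  fixes L :: "'a set" and Q :: "('a \<Rightarrow> nat) \<Rightarrow> bool" and d :: "(nat \<Rightarrow> 'a) \<Rightarrow> nat"
  assumes fin: "finite L"
    and Q_ex: "\<exists>h \<in> {..<m} \<rightarrow>\<^sub>E L. Q (letter_count m h)"
    and HJ: "colouring_prop {1..card L ^ m} 1 c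
               (\<lambda>k M e d. cond_b' 1 M \<and> cond_c' {1..card L ^ m} k 1 M e d) k"
    and d: "d ` ({1..m * k} \<rightarrow>\<^sub>E L) \<subseteq> {..<c}"
  shows "\<exists>M e. is_config L (m * k) m M e \<and> cond_b m M \<and>
    (\<forall>\<nu>1\<in>cfg_points L (m * k) m M e. \<forall>\<nu>2\<in>cfg_points L (m * k) m M e.
       Q (cnt m M \<nu>1) \<and> Q (cnt m M \<nu>2) \<longrightarrow> d \<nu>1 = d \<nu>2) \<and>
    ((\<forall>f. Q f \<longrightarrow> (\<forall>\<alpha>\<in>L. \<forall>\<beta>\<in>L. f \<alpha> = f \<beta>)) \<longrightarrow> cond_d L (m * k) m M e)"
proof -
  define N where "N = card L ^ m"
  define G where "G = {h \<in> {..<m} \<rightarrow>\<^sub>E L. Q (letter_count m h)}"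
  have G_sub: "G \<subseteq> {..<m} \<rightarrow>\<^sub>E L" unfolding G_def by blast
  moreover have "G \<noteq> {}" using Q_ex unfolding G_def by blast
  ultimately obtain g where g_onto: "g ` {1..N} = G" and g_G: "\<And>a. g a \<in> G"
    using ex_onto_interval card_le_words[OF fin] unfolding N_def by metis
  have g_in: "g a l \<in> L" if "l < m" for a l using g_G[of a] G_sub that by auto
  have "(\<lambda>x. d (lift_word m k g x)) ` ({1..k} \<rightarrow>\<^sub>E {1..N}) \<subseteq> {..<c}"
    using d lift_word_PiE[of m g L k, OF g_in] by blast
  then obtain M0' e0 where cfg0: "is_config {1..N} k 1 M0' e0" and M0'_ne: "cond_b' 1 M0'"
      and line: "cond_c' {1..N} k 1 M0' e0 (\<lambda>x. d (lift_word m k g x))"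
    using HJ[folded N_def] unfolding colouring_prop_def by blast
  define M0 where "M0 = M0' 0"
  have M0_sub: "M0 \<subseteq> {1..k}" and M0_ne: "M0 \<noteq> {}"
    using cfg0 M0'_ne unfolding is_config_def cond_b'_def M0_def by auto
  have e0: "e0 \<in> ({1..k} - M0) \<rightarrow>\<^sub>E {1..N}"
    using cfg0 by (simp add: is_config_def cfg_dom_one_block M0_def)
  interpret line_blowup L m k M0 e0 g
    using M0_sub M0_ne g_in by unfold_locales
  obtain j0 where j0: "j0 \<in> M0" using M0_ne by blast
  have on_line: "\<exists>x \<in> cfg_points {1..N} k 1 (\<lambda>_. M0) e0. \<nu> = lift x"
    if \<nu>: "\<nu> \<in> cfg_points L (m * k) m block fixed" and Q\<nu>: "Q (cnt m block \<nu>)" for \<nu>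
  proof (rule cfg_point_on_line[OF \<nu> j0 e0])
    have "restrict (\<lambda>l. \<nu> (l * k + j0)) {..<m} \<in> {..<m} \<rightarrow>\<^sub>E L"
      using \<nu> j0 M0_sub grid_pos_mem[of _ m j0 k] by (auto simp: cfg_points_def PiE_iff)
    moreover have "Q (letter_count m (restrict (\<lambda>l. \<nu> (l * k + j0)) {..<m}))"
      using Q\<nu> cnt_block[OF \<nu> j0] by simp
    ultimately show "restrict (\<lambda>l. \<nu> (l * k + j0)) {..<m} \<in> g ` {1..N}"
      unfolding g_onto G_def by blast
  qed
  have "d \<nu>1 = d \<nu>2"
    if "\<nu>1 \<in> cfg_points L (m * k) m block fixed" "\<nu>2 \<in> cfg_points L (m * k) m block fixed"
      and "Q (cnt m block \<nu>1)" "Q (cnt m block \<nu>2)" for \<nu>1 \<nu>2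
    using on_line[OF that(1,3)] on_line[OF that(2,4)] line
    unfolding cond_c'_def cfg_points_one_block[of _ _ M0'] M0_def by blast
  moreover have "cond_d L (m * k) m block fixed" if "\<forall>f. Q f \<longrightarrow> (\<forall>\<alpha>\<in>L. \<forall>\<beta>\<in>L. f \<alpha> = f \<beta>)"
  proof (rule cond_d_block)
    fix j \<alpha> \<beta> assume "j \<in> {1..k} - M0" "\<alpha> \<in> L" "\<beta> \<in> L"
    moreover have "Q (letter_count m (g (e0 j)))" using g_G[of "e0 j"] unfolding G_def by blast
    ultimately show "letter_count m (g (e0 j)) \<alpha> = letter_count m (g (e0 j)) \<beta>" using that by blast
  qed
  ultimately show ?thesis using is_config_block cond_b_block by blast
qed

lemma card_residue_class:
  fixes q m i :: nat
  assumes q: "0 < q" and dv: "q dvd m" and i: "i < q"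
  shows "card {l. l < m \<and> l mod q = i} = m div q"
proof -
  have "{l. l < m \<and> l mod q = i} = (\<lambda>t. t * q + i) ` {..<m div q}"
  proof (intro equalityI subsetI)
    fix l assume "l \<in> {l. l < m \<and> l mod q = i}"
    then have l: "l < m" "l mod q = i" by auto
    have "l div q < m div q" using l(1) dv by (metis less_mult_imp_div_less dvd_div_mult_self)
    moreover have "l = l div q * q + i" using l(2) by (metis div_mult_mod_eq)
    ultimately show "l \<in> (\<lambda>t. t * q + i) ` {..<m div q}" by blast
  next
    fix l assume "l \<in> (\<lambda>t. t * q + i) ` {..<m div q}"
    then obtain t where t: "t < m div q" "l = t * q + i" by auto
    have "t * q + i < Suc t * q" using i by simp
    also have "\<dots> \<le> m div q * q" using t(1) by (intro mult_right_mono) auto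
    finally show "l \<in> {l. l < m \<and> l mod q = i}" using t(2) i dv by simp
  qed
  moreover have "inj_on (\<lambda>t. t * q + i) {..<m div q}" using q by (auto simp: inj_on_def)
  ultimately show ?thesis by (simp add: card_image)
qed

lemma ex_balanced_word:
  assumes fin: "finite L" and ne: "L \<noteq> {}" and dv: "card L dvd m"
  shows "\<exists>h \<in> {..<m} \<rightarrow>\<^sub>E L. \<forall>\<alpha>\<in>L. letter_count m h \<alpha> = m div card L"
proof -
  define q where "q = card L"
  have q: "0 < q" using fin ne unfolding q_def by (simp add: card_gt_0_iff)
  obtain b where b: "bij_betw b {0..<q} L"
    using ex_bij_betw_nat_finite[OF fin] unfolding q_def by blast
  define h where "h = restrict (\<lambda>l. b (l mod q)) {..<m}"
  have "h \<in> {..<m} \<rightarrow>\<^sub>E L" using bij_betw_apply[OF b] q by (simp add: h_def)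
  moreover have "letter_count m h \<alpha> = m div q" if \<alpha>: "\<alpha> \<in> L" for \<alpha>
  proof -
    obtain i where i: "i < q" "b i = \<alpha>"
      using bij_betw_imp_surj_on[OF b] \<alpha> by (metis atLeastLessThan_iff imageE)
    have "h l = \<alpha> \<longleftrightarrow> l mod q = i" if "l < m" for l
      using that i q bij_betw_imp_inj_on[OF b] unfolding h_def inj_on_def by fastforce
    then have "{l. l < m \<and> h l = \<alpha>} = {l. l < m \<and> l mod q = i}" by blast
    then show ?thesis
      unfolding letter_count_def using card_residue_class[OF q dv[folded q_def] i(1)] by simp
  qed
  ultimately show ?thesis unfolding q_def by blast
qed

lemma assoc_num_le:
  assumes "card L dvd k" and "colouring_prop L m c P k"
  shows "assoc_num L m c P \<le> enat k"
  using assms unfolding assoc_num_def by (auto intro: Least_le)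

lemma colouring_prop_of_assoc_num_eq:
  assumes "assoc_num L m c P = enat k"
  shows "colouring_prop L m c P k"
  using assms LeastI_ex[of "\<lambda>k. card L dvd k \<and> colouring_prop L m c P k"]
  unfolding assoc_num_def by (auto split: if_splits)

lemma colouring_prop_HJ:
  assumes "HJ n c = enat k"
  shows "colouring_prop {1..n} 1 c (\<lambda>k M e d. cond_b' 1 M \<and> cond_c' {1..n} k 1 M e d) k"
  using assms unfolding HJ_def HJ_L_def by (rule colouring_prop_of_assoc_num_eq)

lemma f10_le_mult_HJ:
  assumes fin: "finite L" and ne: "L \<noteq> {}" and dv: "card L dvd m"
    and HJ: "HJ (card L ^ m) c = enat k"
  shows "f10 L m c \<le> enat (m * k)"
proof -
  define Q where "Q = (\<lambda>f :: 'a \<Rightarrow> nat. \<forall>\<alpha>\<in>L. f \<alpha> = m div card L)"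
  have Q_ex: "\<exists>h \<in> {..<m} \<rightarrow>\<^sub>E L. Q (letter_count m h)"
    using ex_balanced_word[OF fin ne dv] unfolding Q_def .
  have ratio: "real m / real (card L) = real (m div card L)"
    using dv by (simp add: real_of_nat_div)
  have "colouring_prop L m c (\<lambda>k M e d. cond_b m M \<and> cond_c L k m M e d \<and> cond_d L k m M e) (m * k)"
    unfolding colouring_prop_def
  proof (intro allI impI)
    fix d :: "(nat \<Rightarrow> 'a) \<Rightarrow> nat"
    assume d: "d ` ({1..m * k} \<rightarrow>\<^sub>E L) \<subseteq> {..<c}"
    obtain M e where cfg: "is_config L (m * k) m M e" "cond_b m M"
      and const: "\<forall>\<nu>1\<in>cfg_points L (m * k) m M e. \<forall>\<nu>2\<in>cfg_points L (m * k) m M e.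
                    Q (cnt m M \<nu>1) \<and> Q (cnt m M \<nu>2) \<longrightarrow> d \<nu>1 = d \<nu>2"
      and bal: "(\<forall>f. Q f \<longrightarrow> (\<forall>\<alpha>\<in>L. \<forall>\<beta>\<in>L. f \<alpha> = f \<beta>)) \<longrightarrow> cond_d L (m * k) m M e"
      using colouring_prop_blowup[OF fin Q_ex colouring_prop_HJ[OF HJ] d] by blast
    have "cond_c L (m * k) m M e d"
      unfolding cond_c_def ratio of_nat_eq_iff
    proof (intro ballI impI)
      fix \<nu>1 \<nu>2
      assume "\<nu>1 \<in> cfg_points L (m * k) m M e" "\<nu>2 \<in> cfg_points L (m * k) m M e"
        and "\<forall>\<alpha>\<in>L. cnt m M \<nu>1 \<alpha> = m div card L \<and> cnt m M \<nu>2 \<alpha> = m div card L"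
      then show "d \<nu>1 = d \<nu>2" using const unfolding Q_def by blast
    qed
    moreover have "cond_d L (m * k) m M e" using bal unfolding Q_def by simp
    ultimately show "\<exists>M e. is_config L (m * k) m M e \<and> cond_b m M \<and>
        cond_c L (m * k) m M e d \<and> cond_d L (m * k) m M e"
      using cfg by blast
  qed
  then show ?thesis unfolding f10_def using dv by (intro assoc_num_le) simp_all
qed

lemma f9star_le_mult_HJ:
  assumes fin: "finite L" and ne: "L \<noteq> {}" and dv: "card L dvd m"
    and HJ: "HJ (card L ^ m) c = enat k"
  shows "f9star L m c \<le> enat (m * k)"
proof -
  have Q_ex: "\<exists>h \<in> {..<m} \<rightarrow>\<^sub>E L. True"
    using ne PiE_eq_empty_iff[of "{..<m}" "\<lambda>_. L"] by blast
  have "colouring_prop L m c (\<lambda>k M e d. cond_b m M \<and> cond_c_plus L k m M e d) (m * k)"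
    unfolding colouring_prop_def
  proof (intro allI impI)
    fix d :: "(nat \<Rightarrow> 'a) \<Rightarrow> nat"
    assume d: "d ` ({1..m * k} \<rightarrow>\<^sub>E L) \<subseteq> {..<c}"
    obtain M e where cfg: "is_config L (m * k) m M e" "cond_b m M"
      and const: "\<forall>\<nu>1\<in>cfg_points L (m * k) m M e. \<forall>\<nu>2\<in>cfg_points L (m * k) m M e. d \<nu>1 = d \<nu>2"
      using colouring_prop_blowup[OF fin Q_ex colouring_prop_HJ[OF HJ] d] by blast
    then have "cond_c_plus L (m * k) m M e d" unfolding cond_c_plus_def by blast
    then show "\<exists>M e. is_config L (m * k) m M e \<and> cond_b m M \<and> cond_c_plus L (m * k) m M e d"
      using cfg by blast
  qed
  then show ?thesis unfolding f9star_def using dv by (intro assoc_num_le) simp_all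
qed

theorem mainTheorem2:
  fixes L :: "'a set" and m c :: nat
  assumes "finite L" and "L \<noteq> {}" and "m \<ge> 1" and "c \<ge> 1" and "card L dvd m"
  shows "f10 L m c \<le> enat m * HJ (card L ^ m) c \<and>
         f9star L m c \<le> enat m * HJ (card L ^ m) c"
proof (cases "HJ (card L ^ m) c")
  case (enat k)
  then show ?thesis
    using f10_le_mult_HJ[OF assms(1,2,5) enat] f9star_le_mult_HJ[OF assms(1,2,5) enat] by simp
next
  case infinity
  then show ?thesis using assms(3) by (simp add: imult_is_infinity)
qed

end
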